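(* There exist a finite-dimensional real vector space $Y$, ordered by a closed cone $Y_+$ with non-empty interior, and a linear operator $B: Y \to Y$ such that the dual semigroup $(e^{tB'})_{t\ge0}$ is individually eventually nonnegative with respect to the dual cone $Y'_+$, but $(e^{tB})_{t\ge0}$ is not individually eventually nonnegative with respect to $Y_+$. (Equivalently, the dual of an individually eventually nonnegative matrix semigroup need not be individually eventually nonnegative.)
   Context: For a finite-dimensional real vector space $X$ ordered by a closed cone $X_+$ with non-empty interior and $A: X\to X$ linear, $(e^{tA})_{t\ge0}$ is individually eventually nonnegative if for each $x\in X_+$ there is $t_0\ge0$ with $e^{tA}x\in X_+$ for all $t\ge t_0$. The dual cone is $X'_+ := \{x' \in X' : \langle x', x\rangle\ge0\ \forall x\in X_+\}$ and $A'$ is the dual operator on $X'$. *)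

theory Defs
  imports "HOL-Analysis.Analysis"
begin

definition op_exp :: "('a::real_normed_vector \<Rightarrow> 'a) \<Rightarrow> real \<Rightarrow> 'a \<Rightarrow> 'a" where
  "op_exp A t x = (\<Sum>n. (t ^ n / fact n) *\<^sub>R (A ^^ n) x)"

definition ordering_cone :: "'a::euclidean_space set \<Rightarrow> bool" where
  "ordering_cone K \<longleftrightarrow> K \<noteq> {} \<and> cone K \<and> convex K \<and> closed K \<and>
     K \<inter> uminus ` K = {0} \<and> interior K \<noteq> {}"

text \<open>Dual cone, the dual space being identified with the space itself via the
  inner product.\<close>
definition dual_cone :: "'a::real_inner set \<Rightarrow> 'a set" where
  "dual_cone K = {y. \<forall>x\<in>K. 0 \<le> inner y x}"

definition ind_ev_nonneg :: "'a::real_normed_vector set \<Rightarrow> ('a \<Rightarrow> 'a) \<Rightarrow> bool" where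
  "ind_ev_nonneg K A \<longleftrightarrow> (\<forall>x\<in>K. \<exists>t0\<ge>0. \<forall>t\<ge>t0. op_exp A t x \<in> K)"

end

theory Submission
  imports Defs
begin

text \<open>
  Take for K the Lorentz cone \<open>x\<^sub>2\<^sup>2 + x\<^sub>3\<^sup>2 \<le> x\<^sub>1\<^sup>2, x\<^sub>1 \<ge> 0\<close> in \<open>\<real>\<^sup>3\<close>, which is self-dual,
  and for B a nilpotent operator of order three. Then every orbit \<open>e\<^sup>t\<^sup>B x\<close> is a quadratic
  polynomial in t, and membership in K is best read in the light-cone coordinates
  \<open>x\<^sub>1 + x\<^sub>2, x\<^sub>1 - x\<^sub>2, x\<^sub>3\<close>, in which K is \<open>x\<^sub>3\<^sup>2 \<le> (x\<^sub>1 + x\<^sub>2)(x\<^sub>1 - x\<^sub>2)\<close> with both factors nonnegative.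
  For the adjoint C of B the coordinate \<open>x\<^sub>1 + x\<^sub>2\<close> is conserved along orbits while \<open>x\<^sub>1 - x\<^sub>2\<close>
  grows quadratically, fast enough to dominate \<open>x\<^sub>3\<^sup>2\<close>; so every orbit starting in K
  eventually stays in K. For B itself the orbit of \<open>e\<^sub>1\<close> is \<open>(1 + t\<^sup>2, t\<^sup>2, 2t)\<close>: here \<open>x\<^sub>1 - x\<^sub>2 = 1\<close>
  stays bounded while \<open>x\<^sub>3\<^sup>2 = 4t\<^sup>2\<close> outgrows \<open>x\<^sub>1 + x\<^sub>2 = 1 + 2t\<^sup>2\<close>, so the orbit leaves K for good.
\<close>

lemma op_exp_nilpotent:
  assumes "\<And>x. (A ^^ k) x = 0"
  shows "op_exp A t x = (\<Sum>n<k. (t ^ n / fact n) *\<^sub>R (A ^^ n) x)"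
proof -
  have "(A ^^ n) x = 0" if "k \<le> n" for n
  proof -
    have "(A ^^ n) x = (A ^^ k) ((A ^^ (n - k)) x)"
      using that by (metis funpow_add comp_apply le_add_diff_inverse)
    then show ?thesis using assms by simp
  qed
  then show ?thesis
    unfolding op_exp_def by (intro suminf_finite) auto
qed

lemma op_exp_nilpotent3:
  assumes "\<And>x. A (A (A x)) = 0"
  shows "op_exp A t x = x + t *\<^sub>R A x + (t^2 / 2) *\<^sub>R A (A x)"
  using op_exp_nilpotent[where A = A and k = 3] assms
  by (simp add: numeral_3_eq_3 numeral_2_eq_2)

lemma dual_cone_eq_INT_halfspaces: "dual_cone K = (\<Inter>x\<in>K. {y. inner x y \<ge> 0})"
  by (auto simp: dual_cone_def inner_commute)

lemma convex_dual_cone: "convex (dual_cone K)"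
  by (simp add: dual_cone_eq_INT_halfspaces convex_INT convex_halfspace_ge)

lemma closed_dual_cone: "closed (dual_cone K)"
  by (simp add: dual_cone_eq_INT_halfspaces closed_INT closed_halfspace_ge)

lemma cone_dual_cone: "cone (dual_cone K)"
  by (auto simp: cone_def dual_cone_def)

lemma vec3_eq_iff: "(x::real^3) = y \<longleftrightarrow> x$1 = y$1 \<and> x$2 = y$2 \<and> x$3 = y$3"
  by (simp add: vec_eq_iff forall_3)

lemma inner_vec3: "inner (x::real^3) y = x$1 * y$1 + x$2 * y$2 + x$3 * y$3"
  by (simp add: inner_vec_def sum_3)

lemma abs_inner2_le:
  fixes a b c d e f :: real
  assumes "b^2 + c^2 \<le> a^2" "0 \<le> a" "e^2 + f^2 \<le> d^2" "0 \<le> d"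
  shows "\<bar>b * e + c * f\<bar> \<le> a * d"
proof -
  have "(b * e + c * f)^2 \<le> (b^2 + c^2) * (e^2 + f^2)"
    using zero_le_power2[of "b * f - c * e"] by (simp add: power2_eq_square algebra_simps)
  also have "\<dots> \<le> (a * d)^2"
    unfolding power_mult_distrib by (rule mult_mono) (use assms in auto)
  finally show ?thesis
    using assms by (simp add: abs_le_square_iff[symmetric])
qed

definition lorentz_cone :: "(real^3) set" where
  "lorentz_cone = {x. x$2^2 + x$3^2 \<le> x$1^2 \<and> 0 \<le> x$1}"

lemma mem_lorentz_cone_iff:
  "x \<in> lorentz_cone \<longleftrightarrow>
     x$3^2 \<le> (x$1 + x$2) * (x$1 - x$2) \<and> 0 \<le> x$1 + x$2 \<and> 0 \<le> x$1 - x$2"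
proof -
  have "x$2^2 + x$3^2 \<le> x$1^2 \<longleftrightarrow> x$3^2 \<le> (x$1 + x$2) * (x$1 - x$2)"
    by (simp add: power2_eq_square algebra_simps)
  moreover have "0 \<le> x$1 \<longleftrightarrow> 0 \<le> x$1 + x$2 \<and> 0 \<le> x$1 - x$2"
    if "x$3^2 \<le> (x$1 + x$2) * (x$1 - x$2)"
    using order_trans[OF zero_le_power2 that] by (auto simp: zero_le_mult_iff)
  ultimately show ?thesis unfolding lorentz_cone_def by blast
qed

lemma dual_lorentz_cone: "dual_cone lorentz_cone = lorentz_cone"
proof
  show "lorentz_cone \<subseteq> dual_cone lorentz_cone"
  proof (unfold dual_cone_def, intro subsetI CollectI ballI)
    fix y x assume "y \<in> lorentz_cone" "x \<in> lorentz_cone"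
    then have "\<bar>y$2 * x$2 + y$3 * x$3\<bar> \<le> y$1 * x$1"
      by (intro abs_inner2_le) (auto simp: lorentz_cone_def)
    then show "0 \<le> inner y x" by (simp add: inner_vec3)
  qed
next
  show "dual_cone lorentz_cone \<subseteq> lorentz_cone"
  proof
    fix y assume y: "y \<in> dual_cone lorentz_cone"
    define r where "r = sqrt (y$2^2 + y$3^2)"
    have r: "0 \<le> r" "r^2 = y$2^2 + y$3^2" by (simp_all add: r_def)
    have "vector [r, -y$2, -y$3] \<in> lorentz_cone" "vector [1, 0, 0] \<in> lorentz_cone"
      using r by (simp_all add: lorentz_cone_def)
    with y have "0 \<le> inner y (vector [r, -y$2, -y$3])" "0 \<le> inner y (vector [1, 0, 0])"
      by (auto simp: dual_cone_def)
    then have "r * r \<le> y$1 * r" "0 \<le> y$1"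
      using r(2) by (simp_all add: inner_vec3 power2_eq_square algebra_simps)
    then have "r \<le> y$1"
      using r(1) by (cases "r = 0") auto
    then have "r^2 \<le> (y$1)^2" using r(1) by (simp add: power_mono)
    then show "y \<in> lorentz_cone" using \<open>0 \<le> y$1\<close> by (simp add: lorentz_cone_def r(2))
  qed
qed

lemma interior_lorentz_cone_nonempty: "interior lorentz_cone \<noteq> {}"
proof -
  let ?U = "{x::real^3. x$2^2 + x$3^2 < x$1^2 \<and> 0 < x$1}"
  have "open ?U"
    by (intro open_Collect_conj open_Collect_less continuous_intros)
  moreover have "?U \<subseteq> lorentz_cone" by (auto simp: lorentz_cone_def)
  ultimately have "?U \<subseteq> interior lorentz_cone" by (simp add: interior_maximal)
  moreover have "vector [1, 0, 0] \<in> ?U" by simp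
  ultimately show ?thesis by blast
qed

lemma ordering_cone_lorentz_cone: "ordering_cone lorentz_cone"
  unfolding ordering_cone_def
proof (intro conjI)
  show "lorentz_cone \<noteq> {}" by (auto simp: lorentz_cone_def intro!: exI[of _ 0])
  show "cone lorentz_cone" "convex lorentz_cone" "closed lorentz_cone"
    using cone_dual_cone convex_dual_cone closed_dual_cone
    by (metis dual_lorentz_cone)+
  show "lorentz_cone \<inter> uminus ` lorentz_cone = {0}"
  proof (intro subset_antisym subsetI)
    fix x assume "x \<in> lorentz_cone \<inter> uminus ` lorentz_cone"
    then have "x \<in> lorentz_cone" "- x \<in> lorentz_cone" by auto
    then have "x$1 = 0" "x$2^2 + x$3^2 \<le> 0" by (auto simp: lorentz_cone_def)
    then show "x \<in> {0}"
      by (simp add: vec3_eq_iff sum_power2_le_zero_iff)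
  qed (auto simp: lorentz_cone_def)
  show "interior lorentz_cone \<noteq> {}" by (rule interior_lorentz_cone_nonempty)
qed

definition counter_gen :: "real^3 \<Rightarrow> real^3" where
  "counter_gen x = vector [x$3, x$3, 2 * x$1 - 2 * x$2]"

definition counter_gen_adjoint :: "real^3 \<Rightarrow> real^3" where
  "counter_gen_adjoint y = vector [2 * y$3, - 2 * y$3, y$1 + y$2]"

lemma linear_counter_gen: "linear counter_gen"
  by (rule linearI) (simp_all add: counter_gen_def vec3_eq_iff algebra_simps)

lemma adjoint_counter_gen: "adjoint counter_gen = counter_gen_adjoint"
  by (rule adjoint_unique) (simp add: inner_vec3 counter_gen_def counter_gen_adjoint_def algebra_simps)

lemma op_exp_counter_gen_basis:
  "op_exp counter_gen t (vector [1, 0, 0]) = vector [1 + t^2, t^2, 2 * t]"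
  by (subst op_exp_nilpotent3) (simp_all add: counter_gen_def vec3_eq_iff)

lemma op_exp_counter_gen_adjoint:
  "op_exp counter_gen_adjoint t y =
     vector [y$1 + 2 * t * y$3 + t^2 * (y$1 + y$2),
             y$2 - 2 * t * y$3 - t^2 * (y$1 + y$2),
             y$3 + t * (y$1 + y$2)]"
  by (subst op_exp_nilpotent3) (simp_all add: counter_gen_adjoint_def vec3_eq_iff algebra_simps)

lemma not_ind_ev_nonneg_counter_gen: "\<not> ind_ev_nonneg lorentz_cone counter_gen"
proof
  assume "ind_ev_nonneg lorentz_cone counter_gen"
  moreover have "vector [1, 0, 0] \<in> lorentz_cone" by (simp add: lorentz_cone_def)
  ultimately obtain t0 where "\<forall>t\<ge>t0. op_exp counter_gen t (vector [1, 0, 0]) \<in> lorentz_cone"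
    unfolding ind_ev_nonneg_def by blast
  then have "vector [1 + t^2, t^2, 2 * t] \<in> lorentz_cone" if "t = max t0 1" for t
    using that op_exp_counter_gen_basis by auto
  then have "(2 * max t0 1)^2 \<le> 1 + 2 * (max t0 1)^2"
    unfolding mem_lorentz_cone_iff by simp
  moreover have "1 \<le> (max t0 1)^2" by (simp add: one_le_power)
  ultimately show False by (simp add: power_mult_distrib)
qed

lemma ind_ev_nonneg_counter_gen_adjoint: "ind_ev_nonneg lorentz_cone counter_gen_adjoint"
  unfolding ind_ev_nonneg_def
proof
  fix y assume y: "y \<in> lorentz_cone"
  define q where "q = y$1 + y$2"
  have yK: "y$3^2 \<le> q * (y$1 - y$2)" "0 \<le> q" "0 \<le> y$1 - y$2"
    using y unfolding mem_lorentz_cone_iff q_def by auto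
  have orbit: "z$1 + z$2 = q" "z$1 - z$2 = y$1 - y$2 + 4 * t * y$3 + 2 * t^2 * q"
      "z$3 = y$3 + t * q" if "z = op_exp counter_gen_adjoint t y" for z t
    using that by (simp_all add: op_exp_counter_gen_adjoint q_def algebra_simps)
  show "\<exists>t0\<ge>0. \<forall>t\<ge>t0. op_exp counter_gen_adjoint t y \<in> lorentz_cone"
  proof (cases "q = 0")
    case True
    then have "y$3 = 0" using yK(1) by simp
    then have "op_exp counter_gen_adjoint t y = y" for t
      using True by (simp add: op_exp_counter_gen_adjoint vec3_eq_iff q_def)
    then show ?thesis using y by auto
  next
    case False
    with yK(2) have "0 < q" by simp
    show ?thesis
    proof (intro exI[of _ "2 * \<bar>y$3\<bar> / q"] conjI allI impI)
      fix t assume "2 * \<bar>y$3\<bar> / q \<le> t"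
      then have "2 * \<bar>y$3\<bar> \<le> t * q" using \<open>0 < q\<close> by (simp add: divide_le_eq)
      then have "\<bar>y$3\<bar> \<le> \<bar>y$3 + t * q\<bar>" by linarith
      then have "y$3^2 \<le> (y$3 + t * q)^2" by (simp add: abs_le_square_iff)
      \<comment> \<open>the target \<open>(y\<^sub>3 + tq)\<^sup>2 \<le> q(z\<^sub>1 - z\<^sub>2)\<close> rearranges to \<open>2y\<^sub>3\<^sup>2 \<le> (y\<^sub>3 + tq)\<^sup>2 + q(y\<^sub>1 - y\<^sub>2)\<close>\<close>
      then have sq: "(y$3 + t * q)^2 \<le> q * (y$1 - y$2 + 4 * t * y$3 + 2 * t^2 * q)"
        using yK(1) by (simp add: power2_eq_square algebra_simps)
      then have "0 \<le> y$1 - y$2 + 4 * t * y$3 + 2 * t^2 * q"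
        using \<open>0 < q\<close> order_trans[OF zero_le_power2 sq] by (meson zero_le_mult_iff not_less)
      then show "op_exp counter_gen_adjoint t y \<in> lorentz_cone"
        unfolding mem_lorentz_cone_iff orbit[OF refl] using sq \<open>0 < q\<close> by simp
    qed (use \<open>0 < q\<close> in simp)
  qed
qed

theorem mainTheorem7:
  shows "\<exists>(K :: (real^3) set) (B :: real^3 \<Rightarrow> real^3).
           ordering_cone K \<and> linear B \<and>
           ind_ev_nonneg (dual_cone K) (adjoint B) \<and>
           \<not> ind_ev_nonneg K B"
proof (intro exI conjI)
  show "ordering_cone lorentz_cone" by (rule ordering_cone_lorentz_cone)
  show "linear counter_gen" by (rule linear_counter_gen)
  show "ind_ev_nonneg (dual_cone lorentz_cone) (adjoint counter_gen)"
    unfolding dual_lorentz_cone adjoint_counter_gen by (rule ind_ev_nonneg_counter_gen_adjoint)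
  show "\<not> ind_ev_nonneg lorentz_cone counter_gen" by (rule not_ind_ev_nonneg_counter_gen)
qed

end
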